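(* Let $d_E$ be the Euclidean metric on $\mathbb R^n$, $\delta>0$, and let $w:\mathbb R^n\to\mathbb R^n$ be a contraction with respect to $d_E$ with contractivity factor $\lambda<\tfrac12$ and fixed point $x_f=\tilde o\in\mathcal D^n(\delta)$. Then the minimal absorbing set of the $\delta$-roundoff $\tilde w$ of $w$ (in $\mathcal D^n(\delta)$) is $\mathcal M[\tilde w]=\{\tilde o\}$.
   Context: For $m\in\mathbb Z^n$, $C_\delta(m)=\prod_{j=1}^n[(m_j-\tfrac12)\delta,(m_j+\tfrac12)\delta)$; $\mathcal D^n(\delta)=\{\delta m:m\in\mathbb Z^n\}\subset\mathbb R^n$. The $\delta$-roundoff of $x\in\mathbb R^n$ is $\tilde x=\delta m$ where $x\in C_\delta(m)$; the $\delta$-roundoff of $w$ is $\tilde w(\tilde x)=\widetilde{w(\tilde x)}$ on $\mathcal D^n(\delta)$. A set $\Lambda\subset\mathcal D^n(\delta)$ is absorbing for $\tilde w$ if for every $\tilde x\in\mathcal D^n(\delta)$ there is $N$ with $\tilde w^{\circ i}(\tilde x)\in\Lambda$ for all $i\ge N$; the minimal absorbing set $\mathcal M[\tilde w]$ is the intersection of all absorbing sets (which, for roundoffs of contractions, is itself absorbing). *)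

theory Defs
  imports "HOL-Analysis.Analysis"
begin

definition lattice :: "real \<Rightarrow> (real ^ 'n) set" where
  "lattice \<delta> = {x. \<forall>j. \<exists>m::int. x $ j = \<delta> * of_int m}"

text \<open>delta-roundoff of x: delta m where x lies in the half-open cube C_delta(m),
  i.e. (m_j - 1/2) delta <= x_j < (m_j + 1/2) delta, so m_j = floor (x_j/delta + 1/2).\<close>
definition roundoff :: "real \<Rightarrow> real ^ 'n \<Rightarrow> real ^ 'n" where
  "roundoff \<delta> x = (\<chi> j. \<delta> * of_int \<lfloor>x $ j / \<delta> + 1/2\<rfloor>)"

definition roundoff_map :: "real \<Rightarrow> (real ^ 'n \<Rightarrow> real ^ 'n) \<Rightarrow> real ^ 'n \<Rightarrow> real ^ 'n" where
  "roundoff_map \<delta> w = (\<lambda>x. roundoff \<delta> (w x))"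

definition absorbing :: "real \<Rightarrow> (real ^ 'n \<Rightarrow> real ^ 'n) \<Rightarrow> (real ^ 'n) set \<Rightarrow> bool" where
  "absorbing \<delta> f \<Lambda> \<longleftrightarrow> \<Lambda> \<subseteq> lattice \<delta> \<and>
     (\<forall>x\<in>lattice \<delta>. \<exists>N. \<forall>i\<ge>N. (f ^^ i) x \<in> \<Lambda>)"

definition minimal_absorbing :: "real \<Rightarrow> (real ^ 'n \<Rightarrow> real ^ 'n) \<Rightarrow> (real ^ 'n) set" where
  "minimal_absorbing \<delta> f = \<Inter>{\<Lambda>. absorbing \<delta> f \<Lambda>}"

end

theory Submission
  imports Defs
begin

text \<open>Measured from a lattice point, rounding at most doubles the distance, because
  \<open>\<bar>\<lfloor>t + 1/2\<rfloor>\<bar> \<le> 2\<bar>t\<bar>\<close> in every coordinate. Hence the roundoff of a \<open>\<lambda>\<close>-contraction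
  fixing \<open>\<tilde>o\<close> pulls every point towards \<open>\<tilde>o\<close> by the factor \<open>2\<lambda> < 1\<close>. Distinct
  lattice points are at distance at least \<open>\<delta>\<close>, so every orbit reaches \<open>\<tilde>o\<close> after
  finitely many steps and stays there; \<open>{\<tilde>o}\<close> is therefore absorbing, and it is
  contained in every absorbing set because \<open>\<tilde>o\<close> is fixed.\<close>

lemma roundoff_in_lattice: "roundoff \<delta> y \<in> lattice \<delta>"
  unfolding roundoff_def lattice_def by auto

lemma roundoff_lattice:
  assumes "\<delta> > 0" "x \<in> lattice \<delta>"
  shows "roundoff \<delta> x = x"
proof -
  have "\<delta> * of_int \<lfloor>x $ j / \<delta> + 1/2\<rfloor> = x $ j" for j
  proof -
    obtain m :: int where m: "x $ j = \<delta> * of_int m"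
      using assms(2) unfolding lattice_def by blast
    have "\<lfloor>x $ j / \<delta> + 1/2\<rfloor> = m"
      using m assms(1) by (simp add: floor_eq_iff)
    then show ?thesis using m by simp
  qed
  then show ?thesis unfolding roundoff_def by (simp add: vec_eq_iff)
qed

lemma lattice_dist_ge:
  assumes "\<delta> > 0" "x \<in> lattice \<delta>" "y \<in> lattice \<delta>" "x \<noteq> y"
  shows "\<delta> \<le> dist x y"
proof -
  obtain j where j: "x $ j \<noteq> y $ j" using assms(4) by (auto simp: vec_eq_iff)
  obtain m :: int where m: "x $ j = \<delta> * of_int m"
    using assms(2) unfolding lattice_def by blast
  obtain k :: int where k: "y $ j = \<delta> * of_int k"
    using assms(3) unfolding lattice_def by blast
  have "1 \<le> \<bar>of_int m - of_int k :: real\<bar>" using j m k by auto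
  then have "\<delta> \<le> \<bar>(x - y) $ j\<bar>"
    using m k assms(1) by (simp add: abs_mult flip: right_diff_distrib)
  also have "\<dots> \<le> norm (x - y)" by (rule component_le_norm_cart)
  finally show ?thesis by (simp add: dist_norm)
qed

lemma abs_floor_add_half_le: "\<bar>of_int \<lfloor>t + 1/2\<rfloor> :: real\<bar> \<le> 2 * \<bar>t\<bar>"
proof (cases "\<bar>t\<bar> < 1/2")
  case True
  then have "\<lfloor>t + 1/2\<rfloor> = 0" by linarith
  then show ?thesis by simp
qed linarith

lemma dist_roundoff_lattice_le:
  assumes "\<delta> > 0" "z \<in> lattice \<delta>"
  shows "dist (roundoff \<delta> y) z \<le> 2 * dist y z"
proof -
  have "norm ((roundoff \<delta> y - z) $ j) \<le> norm ((2 *\<^sub>R (y - z)) $ j)" for j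
  proof -
    obtain k :: int where k: "z $ j = \<delta> * of_int k"
      using assms(2) unfolding lattice_def by blast
    define t where "t = y $ j / \<delta> - of_int k"
    have "\<lfloor>y $ j / \<delta> + 1/2\<rfloor> = \<lfloor>t + 1/2\<rfloor> + k"
      using floor_add_int[of "t + 1/2" k] unfolding t_def by simp
    then have "(roundoff \<delta> y - z) $ j = \<delta> * of_int \<lfloor>t + 1/2\<rfloor>"
      unfolding roundoff_def using k by (simp add: algebra_simps)
    moreover have "(2 *\<^sub>R (y - z)) $ j = \<delta> * (2 * t)"
      unfolding t_def using k assms(1) by (simp add: field_simps)
    ultimately show ?thesis
      using abs_floor_add_half_le[of t] assms(1) by (simp add: abs_mult)
  qed
  then have "norm (roundoff \<delta> y - z) \<le> norm (2 *\<^sub>R (y - z))"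
    by (rule norm_le_componentwise_cart)
  then show ?thesis by (simp add: dist_norm)
qed

lemma dist_funpow_le:
  fixes f :: "'a::metric_space \<Rightarrow> 'a"
  assumes "0 \<le> q" "\<And>x. dist (f x) p \<le> q * dist x p"
  shows "dist ((f ^^ i) x) p \<le> q ^ i * dist x p"
proof (induction i)
  case (Suc i)
  have "dist ((f ^^ Suc i) x) p \<le> q * dist ((f ^^ i) x) p" using assms(2) by simp
  also have "\<dots> \<le> q * (q ^ i * dist x p)" using Suc assms(1) by (rule mult_left_mono)
  finally show ?case by (simp add: mult.assoc)
qed simp

lemma absorbing_singleton_contracting:
  fixes f :: "real ^ 'n \<Rightarrow> real ^ 'n"
  assumes "\<delta> > 0" "p \<in> lattice \<delta>"
    and lattice_closed: "\<And>x. x \<in> lattice \<delta> \<Longrightarrow> f x \<in> lattice \<delta>"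
    and "0 \<le> q" "q < 1" "\<And>x. dist (f x) p \<le> q * dist x p"
  shows "absorbing \<delta> f {p}"
  unfolding absorbing_def
proof (intro conjI ballI)
  show "{p} \<subseteq> lattice \<delta>" using assms(2) by simp
  fix x :: "real ^ 'n" assume x: "x \<in> lattice \<delta>"
  have "(\<lambda>i. q ^ i * dist x p) \<longlonglongrightarrow> 0"
    using assms(4,5) by (intro tendsto_mult_left_zero LIMSEQ_power_zero) simp
  then obtain N where N: "\<And>i. i \<ge> N \<Longrightarrow> q ^ i * dist x p < \<delta>"
    using order_tendstoD(2)[OF _ assms(1)] eventually_sequentially by metis
  have "(f ^^ i) x = p" if "i \<ge> N" for i
  proof (rule ccontr)
    assume "(f ^^ i) x \<noteq> p"
    moreover have "(f ^^ i) x \<in> lattice \<delta>"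
      using x lattice_closed by (induction i) auto
    ultimately have "\<delta> \<le> dist ((f ^^ i) x) p"
      using lattice_dist_ge assms(1,2) by blast
    then show False
      using dist_funpow_le[of q f p i x, OF assms(4,6)] N[OF that] by linarith
  qed
  then show "\<exists>N. \<forall>i\<ge>N. (f ^^ i) x \<in> {p}" by blast
qed

lemma minimal_absorbing_fixed_point:
  fixes f :: "real ^ 'n \<Rightarrow> real ^ 'n"
  assumes "absorbing \<delta> f {p}" "f p = p"
  shows "minimal_absorbing \<delta> f = {p}"
proof -
  have "p \<in> \<Lambda>" if "absorbing \<delta> f \<Lambda>" for \<Lambda>
  proof -
    have "p \<in> lattice \<delta>" using assms(1) unfolding absorbing_def by simp
    with that obtain N where "\<forall>i\<ge>N. (f ^^ i) p \<in> \<Lambda>"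
      unfolding absorbing_def by blast
    moreover have "(f ^^ N) p = p" using assms(2) by (induction N) auto
    ultimately show ?thesis by auto
  qed
  then show ?thesis using assms(1) unfolding minimal_absorbing_def by blast
qed

theorem theorem6:
  fixes w :: "real ^ 'n \<Rightarrow> real ^ 'n" and \<delta> c :: real and xf :: "real ^ 'n"
  assumes "\<delta> > 0"
    and "0 \<le> c" and "c < 1/2"
    and "\<And>x y. dist (w x) (w y) \<le> c * dist x y"
    and "w xf = xf" and "xf \<in> lattice \<delta>"
  shows "minimal_absorbing \<delta> (roundoff_map \<delta> w) = {xf}"
proof -
  let ?f = "roundoff_map \<delta> w"
  have fixed: "?f xf = xf"
    using assms(1,5,6) roundoff_lattice unfolding roundoff_map_def by simp
  have contracting: "dist (?f x) xf \<le> (2 * c) * dist x xf" for x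
  proof -
    have "dist (?f x) xf \<le> 2 * dist (w x) xf"
      unfolding roundoff_map_def using dist_roundoff_lattice_le assms(1,6) by blast
    also have "\<dots> \<le> 2 * (c * dist x xf)" using assms(4)[of x xf] assms(5) by simp
    finally show ?thesis by simp
  qed
  have "absorbing \<delta> ?f {xf}"
    using assms(1-3,6) contracting
    by (intro absorbing_singleton_contracting[where q = "2 * c"]) (auto simp: roundoff_map_def roundoff_in_lattice)
  then show ?thesis using fixed by (rule minimal_absorbing_fixed_point)
qed

end
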